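(* Fix an integer $q\ge 2$ and an integer $s\ge 0$. For $n\ge1$, $N=\{1,\dots,n\}$, let $F^c=\{-\tfrac{q-1}{2},\dots,\tfrac{q-1}{2}\}$ (step $1$), $\Omega=(F^c)^N$, and for couplings $J_A\ge 0$ ($A\subset N$, $|A|\ge2$) let $x_A=e^{J_A}$ and $Z_\gamma=\prod_A x_A^{\delta_{(\sigma^A)_\gamma}}$, where $\delta_{(\sigma^A)_\gamma}=1$ if all coordinates $(\sigma_i)_\gamma$, $i\in A$, are equal and $0$ otherwise. For a list $R$ of elements of $N$ (repetitions allowed) and $A'\subset\Omega$ put $\zeta(R,A')=\sum_{\gamma\in A'}(\sigma^R)_\gamma Z_\gamma$, where $(\sigma^R)_\gamma=\prod_{i\in R}(\sigma_i)_\gamma$ with multiplicity, and $\zeta(R)=\zeta(R,\Omega)$. Suppose that $\zeta(R)\ge 0$ for every $n\ge1$, every list $R$ of elements of $\{1,\dots,n\}$, and every choice of couplings with at most $s$ nonzero $J_A$. Then for every $n$, every list $R$ of elements of $N$, every choice of couplings with $s$ nonzero $J_A$, and every $B\subset N$, we have $\zeta(R,B^{(1)})\ge 0$, where $B^{(1)}=\{\gamma\in\Omega:\delta_{(\sigma^B)_\gamma}=1\}$.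
   Context: $\zeta(R)$ equals $Z\langle\sigma^R\rangle$ for the generalized Potts Gibbs measure $P(\gamma)=Z_\gamma/Z$, $Z=\sum_\gamma Z_\gamma$, with centered spin values. The paper's hypothesis is phrased as "$\zeta^N_s(R)\ge0$ for any $n$ vertices and $q$ number of spins"; it is here read as holding for all systems with at most $s$ nonzero couplings. *)

theory Defs
  imports Complex_Main "HOL-Library.FuncSet"
begin

definition spin :: "nat \<Rightarrow> nat \<Rightarrow> real" where
  "spin q k = real k - (real q - 1) / 2"

text \<open>Configurations gamma in Omega: vertex i in {1..n} gets state gamma i < q
  (spin value spin q (gamma i)).\<close>
definition configs :: "nat \<Rightarrow> nat \<Rightarrow> (nat \<Rightarrow> nat) set" where
  "configs q n = PiE {1..n} (\<lambda>_. {..<q})"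

definition delta :: "(nat \<Rightarrow> nat) \<Rightarrow> nat set \<Rightarrow> nat" where
  "delta \<gamma> A = (if \<forall>i\<in>A. \<forall>j\<in>A. \<gamma> i = \<gamma> j then 1 else 0)"

definition hedges :: "nat \<Rightarrow> nat set set" where
  "hedges n = {A. A \<subseteq> {1..n} \<and> 2 \<le> card A}"

definition Zw :: "nat \<Rightarrow> (nat set \<Rightarrow> real) \<Rightarrow> (nat \<Rightarrow> nat) \<Rightarrow> real" where
  "Zw n J \<gamma> = (\<Prod>A\<in>hedges n. exp (J A) ^ delta \<gamma> A)"

definition sigmaR :: "nat \<Rightarrow> nat list \<Rightarrow> (nat \<Rightarrow> nat) \<Rightarrow> real" where
  "sigmaR q R \<gamma> = prod_list (map (\<lambda>i. spin q (\<gamma> i)) R)"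

definition zeta :: "nat \<Rightarrow> nat \<Rightarrow> (nat set \<Rightarrow> real) \<Rightarrow> nat list \<Rightarrow> (nat \<Rightarrow> nat) set \<Rightarrow> real" where
  "zeta q n J R S = (\<Sum>\<gamma>\<in>S. sigmaR q R \<gamma> * Zw n J \<gamma>)"

definition nonneg_couplings :: "nat \<Rightarrow> (nat set \<Rightarrow> real) \<Rightarrow> bool" where
  "nonneg_couplings n J = (\<forall>A\<in>hedges n. 0 \<le> J A)"

definition num_nonzero :: "nat \<Rightarrow> (nat set \<Rightarrow> real) \<Rightarrow> nat" where
  "num_nonzero n J = card {A\<in>hedges n. J A \<noteq> 0}"

definition B1 :: "nat \<Rightarrow> nat \<Rightarrow> nat set \<Rightarrow> (nat \<Rightarrow> nat) set" where
  "B1 q n B = {\<gamma>\<in>configs q n. delta \<gamma> B = 1}"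

end

theory Submission
  imports Defs
begin

text \<open>Merge the vertices of \<open>B\<close> into one vertex \<open>b \<in> B\<close> and push every coupling
  \<open>J\<^sub>A\<close> forward to the image of \<open>A\<close>. The merged system has no more nonzero couplings, and on
  configurations constant on \<open>B\<close> its weights agree with the original ones up to the factor
  \<open>exp (\<Sum> J\<^sub>A)\<close> over the hyperedges \<open>A\<close> collapsed to a single vertex. In the merged system
  the vertices of \<open>B - {b}\<close> are isolated, so summing out their spins only contributes the
  factor \<open>q ^ (card B - 1)\<close>. Hence \<open>\<zeta>(R, B1 q n B)\<close> is a positive multiple of \<open>\<zeta>\<close> of the
  merged system, which is nonnegative by hypothesis.\<close>

lemma finite_hedges: "finite (hedges n)"
  by (rule finite_subset[of _ "Pow {1..n}"]) (auto simp: hedges_def)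

lemma Zw_eq_exp_sum: "Zw n J \<gamma> = exp (\<Sum>A\<in>hedges n. real (delta \<gamma> A) * J A)"
  unfolding Zw_def by (simp add: finite_hedges exp_sum exp_of_nat_mult)

lemma Zw_cong:
  assumes "\<And>A. A \<in> hedges n \<Longrightarrow> J A \<noteq> 0 \<Longrightarrow> A \<subseteq> T"
    and "\<And>i. i \<in> T \<Longrightarrow> \<gamma> i = \<gamma>' i"
  shows "Zw n J \<gamma> = Zw n J \<gamma>'"
  unfolding Zw_eq_exp_sum
proof (intro arg_cong[where f = exp] sum.cong refl)
  fix A assume "A \<in> hedges n"
  then show "real (delta \<gamma> A) * J A = real (delta \<gamma>' A) * J A"
    using assms by (cases "J A = 0") (auto simp: delta_def subset_iff)
qed

lemma sigmaR_cong: "(\<And>i. i \<in> set R \<Longrightarrow> \<gamma> i = \<gamma>' i) \<Longrightarrow> sigmaR q R \<gamma> = sigmaR q R \<gamma>'"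
  unfolding sigmaR_def by (metis (mono_tags, lifting) map_eq_conv)

lemma sigmaR_map: "sigmaR q (map f R) \<gamma> = sigmaR q R (\<gamma> \<circ> f)"
  by (simp add: sigmaR_def comp_def)

lemma sum_PiE_restrict:
  fixes g :: "('a \<Rightarrow> 'b) \<Rightarrow> real"
  assumes "finite D" "S \<inter> D = {}"
  shows "(\<Sum>\<gamma>\<in>PiE (S \<union> D) (\<lambda>_. A). g (restrict \<gamma> S))
       = real (card A) ^ card D * (\<Sum>\<delta>\<in>PiE S (\<lambda>_. A). g \<delta>)"
  using assms
proof (induction D rule: finite_induct)
  case empty
  then show ?case by (simp cong: sum.cong)
next
  case (insert k D)
  have k: "k \<notin> S \<union> D" using insert by auto
  have "(\<Sum>\<gamma>\<in>PiE (S \<union> insert k D) (\<lambda>_. A). g (restrict \<gamma> S))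
      = (\<Sum>p\<in>A \<times> PiE (S \<union> D) (\<lambda>_. A). g (restrict ((snd p)(k := fst p)) S))"
    unfolding Un_insert_right PiE_insert_eq
    by (subst sum.reindex[OF inj_combinator[OF k]]) (simp add: o_def split_def)
  also have "\<dots> = (\<Sum>p\<in>A \<times> PiE (S \<union> D) (\<lambda>_. A). g (restrict (snd p) S))"
    using k by simp
  also have "\<dots> = real (card A) * (\<Sum>h\<in>PiE (S \<union> D) (\<lambda>_. A). g (restrict h S))"
    using sum.cartesian_product[of "\<lambda>_ h. g (restrict h S)" "PiE (S \<union> D) (\<lambda>_. A)" A]
    by (simp add: split_def)
  also have "\<dots> = real (card A) ^ card (insert k D) * (\<Sum>\<delta>\<in>PiE S (\<lambda>_. A). g \<delta>)"
    using insert by (simp add: restrict_def)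
  finally show ?case .
qed

definition push_couplings :: "nat \<Rightarrow> (nat \<Rightarrow> nat) \<Rightarrow> (nat set \<Rightarrow> real) \<Rightarrow> nat set \<Rightarrow> real" where
  "push_couplings n f J A' = (\<Sum>A\<in>{A\<in>hedges n. f ` A = A'}. J A)"

lemma nonneg_couplings_push:
  "nonneg_couplings n J \<Longrightarrow> nonneg_couplings n (push_couplings n f J)"
  unfolding nonneg_couplings_def push_couplings_def by (auto intro!: sum_nonneg)

lemma push_couplings_nonzero:
  assumes "push_couplings n f J A' \<noteq> 0"
  obtains A where "A \<in> hedges n" "f ` A = A'" "J A \<noteq> 0"
proof -
  from assms obtain A where "A \<in> {A\<in>hedges n. f ` A = A'}" "J A \<noteq> 0"
    unfolding push_couplings_def by (rule sum.not_neutral_contains_not_neutral)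
  then show ?thesis using that by blast
qed

lemma num_nonzero_push_le: "num_nonzero n (push_couplings n f J) \<le> num_nonzero n J"
proof -
  have "{A'\<in>hedges n. push_couplings n f J A' \<noteq> 0} \<subseteq> (\<lambda>A. f ` A) ` {A\<in>hedges n. J A \<noteq> 0}"
  proof
    fix A' assume "A' \<in> {A'\<in>hedges n. push_couplings n f J A' \<noteq> 0}"
    then obtain A where "A \<in> hedges n" "f ` A = A'" "J A \<noteq> 0"
      by (auto elim!: push_couplings_nonzero)
    then show "A' \<in> (\<lambda>A. f ` A) ` {A\<in>hedges n. J A \<noteq> 0}" by blast
  qed
  then have "num_nonzero n (push_couplings n f J) \<le> card ((\<lambda>A. f ` A) ` {A\<in>hedges n. J A \<noteq> 0})"
    unfolding num_nonzero_def by (intro card_mono) (simp_all add: finite_hedges)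
  also have "\<dots> \<le> num_nonzero n J"
    unfolding num_nonzero_def by (rule card_image_le) (simp add: finite_hedges)
  finally show ?thesis .
qed

text \<open>Configurations constant on the fibres of the retraction \<open>f\<close> are the configurations
  of the system in which every fibre is merged to a single vertex.\<close>

locale vertex_retraction =
  fixes n :: nat and f :: "nat \<Rightarrow> nat"
  assumes retraction_into: "i \<in> {1..n} \<Longrightarrow> f i \<in> {1..n}"
    and retraction_idem: "i \<in> {1..n} \<Longrightarrow> f (f i) = f i"
begin

definition collapsed_configs :: "nat \<Rightarrow> (nat \<Rightarrow> nat) set" where
  "collapsed_configs q = {\<gamma>\<in>configs q n. \<forall>i\<in>{1..n}. \<gamma> (f i) = \<gamma> i}"

definition collapse :: "(nat \<Rightarrow> nat) \<Rightarrow> nat \<Rightarrow> nat" where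
  "collapse \<gamma> = restrict (\<gamma> \<circ> f) {1..n}"

lemma collapse_on_image:
  assumes "i \<in> f ` {1..n}"
  shows "collapse \<gamma> i = \<gamma> i"
proof -
  obtain j where j: "j \<in> {1..n}" "i = f j" using assms by blast
  then show ?thesis
    using retraction_into[OF j(1)] retraction_idem[OF j(1)] by (simp add: collapse_def)
qed

lemma collapse_restrict_image: "collapse (restrict \<gamma> (f ` {1..n})) = collapse \<gamma>"
  unfolding collapse_def by (rule restrict_compose_left) auto

lemma bij_betw_collapse:
  "bij_betw collapse (PiE (f ` {1..n}) (\<lambda>_. {..<q})) (collapsed_configs q)"
proof (rule bij_betw_byWitness[where f' = "\<lambda>\<gamma>. restrict \<gamma> (f ` {1..n})"])
  show "\<forall>\<delta>\<in>PiE (f ` {1..n}) (\<lambda>_. {..<q}). restrict (collapse \<delta>) (f ` {1..n}) = \<delta>"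
    using collapse_on_image by (auto simp: PiE_iff extensional_def)
  show "\<forall>\<gamma>\<in>collapsed_configs q. collapse (restrict \<gamma> (f ` {1..n})) = \<gamma>"
    unfolding collapse_restrict_image
    by (auto intro!: PiE_ext[of _ "{1..n}" "\<lambda>_. {..<q}"]
        simp: collapsed_configs_def configs_def collapse_def)
  show "collapse ` PiE (f ` {1..n}) (\<lambda>_. {..<q}) \<subseteq> collapsed_configs q"
    using retraction_into retraction_idem
    by (auto simp: collapsed_configs_def configs_def collapse_def PiE_iff)
  show "(\<lambda>\<gamma>. restrict \<gamma> (f ` {1..n})) ` collapsed_configs q \<subseteq> PiE (f ` {1..n}) (\<lambda>_. {..<q})"
    using retraction_into by (auto simp: collapsed_configs_def configs_def PiE_iff)
qed

lemma sum_configs_collapse: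
  assumes invariant: "\<And>\<gamma>. \<gamma> \<in> configs q n \<Longrightarrow> F \<gamma> = F (collapse \<gamma>)"
  shows "sum F (configs q n) = real q ^ card ({1..n} - f ` {1..n}) * sum F (collapsed_configs q)"
proof -
  let ?T = "f ` {1..n}" and ?D = "{1..n} - f ` {1..n}"
  have split: "{1..n} = ?T \<union> ?D" using retraction_into by auto
  have "sum F (configs q n) = (\<Sum>\<gamma>\<in>PiE (?T \<union> ?D) (\<lambda>_. {..<q}). (F \<circ> collapse) (restrict \<gamma> ?T))"
    unfolding configs_def split[symmetric]
  proof (intro sum.cong refl)
    fix \<gamma> assume "\<gamma> \<in> PiE {1..n} (\<lambda>_. {..<q})"
    then have "F \<gamma> = F (collapse \<gamma>)"
      using invariant unfolding configs_def by blast
    then show "F \<gamma> = (F \<circ> collapse) (restrict \<gamma> ?T)"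
      by (simp only: o_def collapse_restrict_image)
  qed
  also have "\<dots> = real q ^ card ?D * (\<Sum>\<delta>\<in>PiE ?T (\<lambda>_. {..<q}). F (collapse \<delta>))"
    by (subst sum_PiE_restrict) auto
  also have "(\<Sum>\<delta>\<in>PiE ?T (\<lambda>_. {..<q}). F (collapse \<delta>)) = sum F (collapsed_configs q)"
    by (rule sum.reindex_bij_betw[OF bij_betw_collapse])
  finally show ?thesis .
qed

lemma push_couplings_support:
  assumes "push_couplings n f J A \<noteq> 0"
  shows "A \<subseteq> f ` {1..n}"
proof -
  obtain A0 where "A0 \<in> hedges n" "f ` A0 = A"
    using assms by (rule push_couplings_nonzero)
  then show ?thesis by (auto simp: hedges_def)
qed

text \<open>A hyperedge collapsed by \<open>f\<close> to fewer than two vertices is satisfied by every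
  configuration constant on the fibres, so its weight becomes a constant factor.\<close>

lemma Zw_push_couplings:
  assumes fibre_const: "\<forall>i\<in>{1..n}. \<gamma> (f i) = \<gamma> i"
  shows "Zw n J \<gamma> = exp (\<Sum>A\<in>{A\<in>hedges n. f ` A \<notin> hedges n}. J A) * Zw n (push_couplings n f J) \<gamma>"
proof -
  let ?H = "hedges n"
  let ?H1 = "{A\<in>?H. f ` A \<in> ?H}" and ?H2 = "{A\<in>?H. f ` A \<notin> ?H}"
  let ?g = "\<lambda>A. real (delta \<gamma> A) * J A"
  have delta_image: "delta \<gamma> (f ` A) = delta \<gamma> A" if "A \<in> ?H" for A
  proof -
    have "\<gamma> (f i) = \<gamma> i" if "i \<in> A" for i
      using fibre_const that \<open>A \<in> ?H\<close> by (auto simp: hedges_def)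
    then show ?thesis by (simp add: delta_def)
  qed
  have delta_collapsed: "delta \<gamma> A = 1" if "A \<in> ?H2" for A
  proof -
    have "f ` A \<subseteq> {1..n}" using that retraction_into by (auto simp: hedges_def)
    then have "card (f ` A) \<le> 1" using that by (auto simp: hedges_def)
    then have "delta \<gamma> (f ` A) = 1"
      unfolding delta_def
      by (intro if_P) (metis card_le_Suc0_iff_eq finite_subset[OF \<open>f ` A \<subseteq> {1..n}\<close>]
          finite_atLeastAtMost One_nat_def)
    with delta_image that show ?thesis by simp
  qed
  have fin: "finite ?H1" "finite ?H2" using finite_hedges[of n] by auto
  have "?H1 \<inter> ?H2 = {}" "?H1 \<union> ?H2 = ?H" by blast+
  then have "sum ?g ?H = sum ?g ?H1 + sum ?g ?H2"
    using sum.union_disjoint[OF fin, of ?g] by simp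
  also have "sum ?g ?H2 = sum J ?H2"
    using delta_collapsed by (intro sum.cong) simp_all
  also have "sum ?g ?H1 = (\<Sum>A\<in>?H1. real (delta \<gamma> (f ` A)) * J A)"
    using delta_image by (intro sum.cong) simp_all
  also have "\<dots> = (\<Sum>A'\<in>?H. \<Sum>A\<in>{A\<in>?H1. f ` A = A'}. real (delta \<gamma> (f ` A)) * J A)"
    by (rule sum.group[symmetric]) (auto simp: finite_hedges)
  also have "\<dots> = (\<Sum>A'\<in>?H. real (delta \<gamma> A') * push_couplings n f J A')"
    unfolding push_couplings_def sum_distrib_left
    by (intro sum.cong refl) (auto intro!: sum.cong)
  finally show ?thesis
    unfolding Zw_eq_exp_sum by (simp add: exp_add)
qed

lemma zeta_configs_push:
  assumes "set R \<subseteq> {1..n}"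
  shows "zeta q n (push_couplings n f J) (map f R) (configs q n)
       = real q ^ card ({1..n} - f ` {1..n})
         * zeta q n (push_couplings n f J) (map f R) (collapsed_configs q)"
  unfolding zeta_def
proof (rule sum_configs_collapse)
  fix \<gamma>
  have "sigmaR q (map f R) \<gamma> = sigmaR q (map f R) (collapse \<gamma>)"
    using assms retraction_into by (intro sigmaR_cong) (auto simp: collapse_on_image)
  moreover have "Zw n (push_couplings n f J) \<gamma> = Zw n (push_couplings n f J) (collapse \<gamma>)"
    by (rule Zw_cong[OF push_couplings_support]) (simp_all add: collapse_on_image)
  ultimately show "sigmaR q (map f R) \<gamma> * Zw n (push_couplings n f J) \<gamma>
      = sigmaR q (map f R) (collapse \<gamma>) * Zw n (push_couplings n f J) (collapse \<gamma>)"
    by simp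
qed

lemma zeta_collapsed_configs_push:
  assumes "set R \<subseteq> {1..n}"
  shows "zeta q n J R (collapsed_configs q)
       = exp (\<Sum>A\<in>{A\<in>hedges n. f ` A \<notin> hedges n}. J A)
         * zeta q n (push_couplings n f J) (map f R) (collapsed_configs q)"
  unfolding zeta_def sum_distrib_left
proof (rule sum.cong[OF refl])
  fix \<gamma> assume "\<gamma> \<in> collapsed_configs q"
  then have fibre_const: "\<forall>i\<in>{1..n}. \<gamma> (f i) = \<gamma> i"
    unfolding collapsed_configs_def by simp
  have "sigmaR q R \<gamma> = sigmaR q (map f R) \<gamma>"
    unfolding sigmaR_map using assms fibre_const by (intro sigmaR_cong) auto
  then show "sigmaR q R \<gamma> * Zw n J \<gamma>
      = exp (\<Sum>A\<in>{A\<in>hedges n. f ` A \<notin> hedges n}. J A)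
        * (sigmaR q (map f R) \<gamma> * Zw n (push_couplings n f J) \<gamma>)"
    using Zw_push_couplings[OF fibre_const, of J] by (simp add: mult.left_commute)
qed

lemma zeta_collapsed_configs_nonneg:
  assumes "set R \<subseteq> {1..n}" "0 < q"
    and "0 \<le> zeta q n (push_couplings n f J) (map f R) (configs q n)"
  shows "0 \<le> zeta q n J R (collapsed_configs q)"
proof -
  have "0 < real q ^ card ({1..n} - f ` {1..n})"
    using assms(2) by simp
  then have "0 \<le> zeta q n (push_couplings n f J) (map f R) (collapsed_configs q)"
    using assms(3) unfolding zeta_configs_push[OF assms(1)] by (metis zero_le_mult_iff not_le)
  then show ?thesis
    unfolding zeta_collapsed_configs_push[OF assms(1)] by simp
qed

end

definition merge_map :: "nat set \<Rightarrow> nat \<Rightarrow> nat \<Rightarrow> nat" where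
  "merge_map B b i = (if i \<in> B then b else i)"

lemma vertex_retraction_merge_map:
  "B \<subseteq> {1..n} \<Longrightarrow> b \<in> B \<Longrightarrow> vertex_retraction n (merge_map B b)"
  by unfold_locales (auto simp: merge_map_def)

lemma collapsed_configs_merge_map:
  assumes "B \<subseteq> {1..n}" "b \<in> B"
  shows "vertex_retraction.collapsed_configs n (merge_map B b) q = B1 q n B"
proof -
  interpret vertex_retraction n "merge_map B b"
    using assms by (rule vertex_retraction_merge_map)
  have "(\<forall>i\<in>{1..n}. \<gamma> (merge_map B b i) = \<gamma> i) \<longleftrightarrow> delta \<gamma> B = 1" for \<gamma>
  proof
    assume fibre_const: "\<forall>i\<in>{1..n}. \<gamma> (merge_map B b i) = \<gamma> i"
    have "\<gamma> i = \<gamma> b" if "i \<in> B" for i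
    proof -
      have "\<gamma> (merge_map B b i) = \<gamma> i" using fibre_const that assms(1) by blast
      then show ?thesis using that by (simp add: merge_map_def)
    qed
    then show "delta \<gamma> B = 1" unfolding delta_def by (intro if_P) metis
  next
    assume "delta \<gamma> B = 1"
    then have "\<forall>i\<in>B. \<forall>j\<in>B. \<gamma> i = \<gamma> j" unfolding delta_def by (metis zero_neq_one)
    then show "\<forall>i\<in>{1..n}. \<gamma> (merge_map B b i) = \<gamma> i"
      unfolding merge_map_def using assms(2) by (metis (full_types))
  qed
  then show ?thesis unfolding collapsed_configs_def B1_def by blast
qed

theorem lemma2:
  fixes q s :: nat
  assumes "q \<ge> 2"
    and hyp: "\<forall>m R J. 1 \<le> m \<longrightarrow> set R \<subseteq> {1..m} \<longrightarrow> nonneg_couplings m J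
              \<longrightarrow> num_nonzero m J \<le> s \<longrightarrow> 0 \<le> zeta q m J R (configs q m)"
    and "1 \<le> n" and "set R \<subseteq> {1..n}"
    and "nonneg_couplings n J" and "num_nonzero n J = s"
    and "B \<subseteq> {1..n}"
  shows "0 \<le> zeta q n J R (B1 q n B)"
proof (cases "B = {}")
  case True
  then have "B1 q n B = configs q n" by (auto simp: B1_def delta_def)
  then show ?thesis using hyp assms by simp
next
  case False
  then obtain b where b: "b \<in> B" by blast
  interpret vertex_retraction n "merge_map B b"
    using assms(7) b by (rule vertex_retraction_merge_map)
  have "set (map (merge_map B b) R) \<subseteq> {1..n}"
    using assms(4) retraction_into by auto
  moreover have "num_nonzero n (push_couplings n (merge_map B b) J) \<le> s"
    using num_nonzero_push_le assms(6) by blast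
  ultimately have "0 \<le> zeta q n (push_couplings n (merge_map B b) J) (map (merge_map B b) R) (configs q n)"
    using hyp assms(3) nonneg_couplings_push[OF assms(5)] by blast
  then have "0 \<le> zeta q n J R (collapsed_configs q)"
    using assms(1,4) by (intro zeta_collapsed_configs_nonneg) auto
  then show ?thesis
    unfolding collapsed_configs_merge_map[OF assms(7) b] .
qed

end
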